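(* Let $\Gamma$ be a metrized graph with $4$ vertices. Then $$3\,y(\Gamma) \leq Kf(\Gamma) \leq 4\, y(\Gamma).$$
   Context: A metrized graph $\Gamma$ is a finite connected graph (multiple edges and self-loops allowed) each of whose edges is identified with a closed segment of positive length, with a finite nonempty vertex set $V(\Gamma)$ containing every point of valence $\neq2$; $L_i$ is the length of $e_i$, $r$ the effective resistance (edges as resistors of resistance equal to length). $Kf(\Gamma)=\frac12\sum_{p,q\in V(\Gamma)}r(p,q)$. For an edge $e_i$ with end points $p_i,q_i$: if $\Gamma-e_i$ (interior deleted) is connected, $R_i$ is the effective resistance between $p_i,q_i$ in $\Gamma-e_i$, $R_{a_i,p}=\hat j_{p_i}(p,q_i)$, $R_{b_i,p}=\hat j_{q_i}(p,p_i)$ with $\hat j_z(x,y)$ the voltage function of $\Gamma-e_i$ (potential at $x$ when unit current enters at $y$ and exits at $z$, potential $0$ at $z$); if $e_i$ is a bridge, $R_{a_i,p}=0,R_{b_i,p}=R_i$ for $p$ in the component of $\Gamma-e_i$ containing $p_i$ and $R_{a_i,p}=R_i,R_{b_i,p}=0$ otherwise, with every expression in $R_i$ interpreted as its limit as $R_i\to\infty$; for a self-loop $R_i=0$. For a fixed vertex $p$ (independent of choice), $y(\Gamma)=\frac14\sum_{e_i}\frac{L_iR_i^2}{(L_i+R_i)^2}+\frac34\sum_{e_i}\frac{L_i(R_{a_i,p}-R_{b_i,p})^2}{(L_i+R_i)^2}$. *)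

theory Defs
  imports Complex_Main
begin

text \<open>A metrized graph with vertex set V is modelled by a list of edges; edge i is a
  triple (p_i, q_i, L_i): end points p_i, q_i (possibly equal: self-loop) and length L_i > 0.
  Multiple edges are allowed (the list may repeat end point pairs).\<close>

type_synonym 'v medges = "('v \<times> 'v \<times> real) list"

definition adj :: "'v medges \<Rightarrow> 'v \<Rightarrow> 'v \<Rightarrow> bool" where
  "adj E x y \<longleftrightarrow> (\<exists>(a, b, l) \<in> set E. (a = x \<and> b = y) \<or> (a = y \<and> b = x))"

definition graph_connected :: "'v set \<Rightarrow> 'v medges \<Rightarrow> bool" where
  "graph_connected V E \<longleftrightarrow> (\<forall>x\<in>V. \<forall>y\<in>V. (adj E)\<^sup>*\<^sup>* x y)"

definition metrized_graph :: "'v set \<Rightarrow> 'v medges \<Rightarrow> bool" where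
  "metrized_graph V E \<longleftrightarrow> finite V \<and> V \<noteq> {} \<and>
     (\<forall>(a, b, l) \<in> set E. a \<in> V \<and> b \<in> V \<and> l > 0) \<and> graph_connected V E"

definition del_edge :: "'v medges \<Rightarrow> nat \<Rightarrow> 'v medges" where
  "del_edge E i = take i E @ drop (Suc i) E"

text \<open>Net current flowing out of vertex v into the edges (edges as resistors of
  resistance equal to their length) under the potential phi.\<close>
definition outflow :: "'v medges \<Rightarrow> ('v \<Rightarrow> real) \<Rightarrow> 'v \<Rightarrow> real" where
  "outflow E phi v = sum_list (map (\<lambda>(a, b, l).
      (if a = v then (phi v - phi b) / l else 0) + (if b = v then (phi v - phi a) / l else 0)) E)"

text \<open>phi is the potential when unit current enters at y and exits at z, with potential 0 at z.\<close>
definition is_potential :: "'v set \<Rightarrow> 'v medges \<Rightarrow> 'v \<Rightarrow> 'v \<Rightarrow> ('v \<Rightarrow> real) \<Rightarrow> bool" where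
  "is_potential V E z y phi \<longleftrightarrow> phi z = 0 \<and> (\<forall>v. v \<notin> V \<longrightarrow> phi v = 0) \<and>
     (\<forall>v\<in>V. outflow E phi v = (if v = y then 1 else 0) - (if v = z then 1 else 0))"

text \<open>Voltage function j_z(x,y): potential at x when unit current enters at y and exits at z.\<close>
definition voltage :: "'v set \<Rightarrow> 'v medges \<Rightarrow> 'v \<Rightarrow> 'v \<Rightarrow> 'v \<Rightarrow> real" where
  "voltage V E z x y = (THE phi. is_potential V E z y phi) x"

definition eff_res :: "'v set \<Rightarrow> 'v medges \<Rightarrow> 'v \<Rightarrow> 'v \<Rightarrow> real" where
  "eff_res V E x y = voltage V E y x x"

definition Kf :: "'v set \<Rightarrow> 'v medges \<Rightarrow> real" where
  "Kf V E = (1/2) * (\<Sum>p\<in>V. \<Sum>q\<in>V. eff_res V E p q)"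

definition elen :: "'v medges \<Rightarrow> nat \<Rightarrow> real" where
  "elen E i = snd (snd (E ! i))"

definition ep :: "'v medges \<Rightarrow> nat \<Rightarrow> 'v" where
  "ep E i = fst (E ! i)"

definition eq :: "'v medges \<Rightarrow> nat \<Rightarrow> 'v" where
  "eq E i = fst (snd (E ! i))"

definition R_i :: "'v set \<Rightarrow> 'v medges \<Rightarrow> nat \<Rightarrow> real" where
  "R_i V E i = eff_res V (del_edge E i) (ep E i) (eq E i)"

definition R_a :: "'v set \<Rightarrow> 'v medges \<Rightarrow> nat \<Rightarrow> 'v \<Rightarrow> real" where
  "R_a V E i p = voltage V (del_edge E i) (ep E i) p (eq E i)"

definition R_b :: "'v set \<Rightarrow> 'v medges \<Rightarrow> nat \<Rightarrow> 'v \<Rightarrow> real" where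
  "R_b V E i p = voltage V (del_edge E i) (eq E i) p (ep E i)"

text \<open>Edge terms; for a bridge (Gamma - e_i disconnected) the expressions are replaced by their
  limits as R_i tends to infinity (in both terms (R_a - R_b)^2 = R_i^2 for a bridge).\<close>
definition yterm1 :: "'v set \<Rightarrow> 'v medges \<Rightarrow> nat \<Rightarrow> real" where
  "yterm1 V E i = (let L = elen E i in
     if graph_connected V (del_edge E i)
     then L * (R_i V E i)\<^sup>2 / (L + R_i V E i)\<^sup>2
     else Lim at_top (\<lambda>R. L * R\<^sup>2 / (L + R)\<^sup>2))"

definition yterm2 :: "'v set \<Rightarrow> 'v medges \<Rightarrow> 'v \<Rightarrow> nat \<Rightarrow> real" where
  "yterm2 V E p i = (let L = elen E i in
     if graph_connected V (del_edge E i)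
     then L * (R_a V E i p - R_b V E i p)\<^sup>2 / (L + R_i V E i)\<^sup>2
     else Lim at_top (\<lambda>R. L * R\<^sup>2 / (L + R)\<^sup>2))"

definition y_inv :: "'v set \<Rightarrow> 'v medges \<Rightarrow> 'v \<Rightarrow> real" where
  "y_inv V E p = (1/4) * (\<Sum>i<length E. yterm1 V E i) + (3/4) * (\<Sum>i<length E. yterm2 V E p i)"

end

theory Submission
  imports Defs "HOL-Real_Asymp.Real_Asymp"
begin

text \<open>If
  \<open>\<Gamma> - e\<^sub>i\<close> is connected, with resistance \<open>R\<^sub>i\<close> between the end points, putting \<open>e\<^sub>i\<close> back in
  parallel scales the potentials of \<open>\<Gamma> - e\<^sub>i\<close> by \<open>L\<^sub>i / (L\<^sub>i + R\<^sub>i)\<close>; with reciprocity and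
  superposition the terms become \<open>r(p\<^sub>i, q\<^sub>i)\<^sup>2 / L\<^sub>i\<close> and \<open>(r(p, p\<^sub>i) - r(p, q\<^sub>i))\<^sup>2 / L\<^sub>i\<close>, which
  also holds for bridges. On four vertices, merging parallel edges leaves the complete graph
  \<open>K\<^sub>4\<close> with conductances \<open>c \<ge> 0\<close>, and Kirchhoff's theorem gives every resistance as
  \<open>F / T\<close>, where \<open>T\<close> is the spanning-tree polynomial and \<open>F\<close> counts the spanning 2-forests
  separating the two vertices. After clearing the denominator \<open>T\<^sup>2\<close>, both \<open>Kf - 3 y\<close> and
  \<open>4 y - Kf\<close> are polynomials in the conductances with nonnegative coefficients.\<close>

section \<open>Potentials in resistive networks\<close>

definition edges_in :: "'v set \<Rightarrow> 'v medges \<Rightarrow> bool" where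
  "edges_in V E \<longleftrightarrow> (\<forall>(a, b, l) \<in> set E. a \<in> V \<and> b \<in> V \<and> l > 0)"

lemma edges_inD:
  assumes "edges_in V E" "(a, b, l) \<in> set E"
  shows "a \<in> V" "b \<in> V" "l > 0"
  using assms by (auto simp: edges_in_def)

lemma outflow_Nil [simp]: "outflow [] \<phi> v = 0"
  by (simp add: outflow_def)

lemma outflow_Cons [simp]:
  "outflow ((a, b, l) # E) \<phi> v =
     (if a = v then (\<phi> v - \<phi> b) / l else 0) + (if b = v then (\<phi> v - \<phi> a) / l else 0) + outflow E \<phi> v"
  by (simp add: outflow_def)

lemma outflow_append: "outflow (E @ E') \<phi> v = outflow E \<phi> v + outflow E' \<phi> v"
  by (simp add: outflow_def)

lemma outflow_affine: "outflow E (\<lambda>x. s * \<phi> x + t) v = s * outflow E \<phi> v"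
  by (induction E) (auto simp: diff_divide_distrib algebra_simps)

lemma outflow_diff: "outflow E (\<lambda>x. \<phi> x - \<psi> x) v = outflow E \<phi> v - outflow E \<psi> v"
  by (induction E) (auto simp: diff_divide_distrib)

lemma outflow_cong:
  assumes "edges_in V E" "v \<in> V" "\<And>x. x \<in> V \<Longrightarrow> \<phi> x = \<psi> x"
  shows "outflow E \<phi> v = outflow E \<psi> v"
  using assms(1) by (induction E) (auto simp: edges_in_def assms(2,3))

lemma outflow_eq_0_if_level: "\<forall>(a, b, l) \<in> set E. \<phi> a = \<phi> b \<Longrightarrow> outflow E \<phi> v = 0"
  by (induction E) auto

lemma sum_mult_outflow:
  assumes "finite V" "edges_in V E"
  shows "(\<Sum>v\<in>V. \<psi> v * outflow E \<phi> v) = (\<Sum>(a, b, l)\<leftarrow>E. (\<psi> a - \<psi> b) * (\<phi> a - \<phi> b) / l)"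
  using assms(2)
proof (induction E)
  case (Cons e E)
  obtain a b l where e: "e = (a, b, l)" by (cases e)
  have ab: "a \<in> V" "b \<in> V" using Cons.prems e by (auto simp: edges_in_def)
  have "\<psi> v * outflow (e # E) \<phi> v = (if v = a then \<psi> a * (\<phi> a - \<phi> b) / l else 0)
      + (if v = b then \<psi> b * (\<phi> b - \<phi> a) / l else 0) + \<psi> v * outflow E \<phi> v" for v
    by (auto simp: e algebra_simps)
  then have "(\<Sum>v\<in>V. \<psi> v * outflow (e # E) \<phi> v)
      = \<psi> a * (\<phi> a - \<phi> b) / l + \<psi> b * (\<phi> b - \<phi> a) / l + (\<Sum>v\<in>V. \<psi> v * outflow E \<phi> v)"
    using ab assms(1) by (simp add: sum.distrib)
  then show ?case
    using Cons by (simp add: e edges_in_def algebra_simps diff_divide_distrib add_divide_distrib)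
qed simp

lemma is_potential_zero: "is_potential V E z z (\<lambda>_. 0)"
proof -
  have "outflow E (\<lambda>_. 0) v = 0" for v by (rule outflow_eq_0_if_level) simp
  then show ?thesis by (simp add: is_potential_def)
qed

lemma sum_mult_outflow_potential:
  assumes "finite V" "edges_in V E" "is_potential V E z y \<phi>" "y \<in> V" "z \<in> V"
  shows "(\<Sum>v\<in>V. \<psi> v * outflow E \<phi> v) = \<psi> y - \<psi> z"
proof -
  have "(\<Sum>v\<in>V. \<psi> v * outflow E \<phi> v) = (\<Sum>v\<in>V. (if v = y then \<psi> v else 0) - (if v = z then \<psi> v else 0))"
    using assms(3) by (intro sum.cong) (auto simp: is_potential_def)
  also have "\<dots> = \<psi> y - \<psi> z"
    using assms(1,4,5) by (simp add: sum_subtractf)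
  finally show ?thesis .
qed

lemma potential_source_nonneg:
  assumes "finite V" "edges_in V E" "is_potential V E z y \<phi>" "y \<in> V" "z \<in> V"
  shows "0 \<le> \<phi> y"
proof -
  have "\<phi> y = (\<Sum>v\<in>V. \<phi> v * outflow E \<phi> v)"
    using sum_mult_outflow_potential[OF assms] assms(3) by (simp add: is_potential_def)
  also have "\<dots> = (\<Sum>(a, b, l)\<leftarrow>E. (\<phi> a - \<phi> b) * (\<phi> a - \<phi> b) / l)"
    by (rule sum_mult_outflow[OF assms(1,2)])
  also have "\<dots> \<ge> 0"
    using assms(2) by (intro sum_list_nonneg) (auto simp: edges_in_def)
  finally show ?thesis .
qed

text \<open>Both sides equal the Dirichlet form \<open>\<Sum>(\<phi> a - \<phi> b) (\<psi> a - \<psi> b) / l\<close> of the two potentials.\<close>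
lemma potential_reciprocity:
  assumes "finite V" "edges_in V E" "x \<in> V" "y \<in> V" "z \<in> V"
    and "is_potential V E z x \<phi>" "is_potential V E z y \<psi>"
  shows "\<phi> y = \<psi> x"
proof -
  have "\<phi> y - \<phi> z = (\<Sum>v\<in>V. \<phi> v * outflow E \<psi> v)"
    using sum_mult_outflow_potential[OF assms(1,2,7,4,5)] by simp
  also have "\<dots> = (\<Sum>v\<in>V. \<psi> v * outflow E \<phi> v)"
    unfolding sum_mult_outflow[OF assms(1,2)] by (simp add: mult.commute)
  also have "\<dots> = \<psi> x - \<psi> z"
    by (rule sum_mult_outflow_potential[OF assms(1,2,6,3,5)])
  finally show ?thesis
    using assms(6,7) by (simp add: is_potential_def)
qed

locale network =
  fixes V :: "'v set" and E :: "'v medges"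
  assumes finite_vertices: "finite V"
    and edges_in: "edges_in V E"
    and connected: "graph_connected V E"
begin

lemma harmonic_eq_0:
  assumes "z \<in> V" "\<phi> z = 0" "\<And>v. v \<in> V \<Longrightarrow> outflow E \<phi> v = 0" "x \<in> V"
  shows "\<phi> x = 0"
proof -
  let ?energy = "map (\<lambda>(a, b, l). (\<phi> a - \<phi> b) * (\<phi> a - \<phi> b) / l) E"
  have "sum_list ?energy = 0"
    using sum_mult_outflow[OF finite_vertices edges_in, of \<phi> \<phi>] assms(3) by simp
  moreover have "\<forall>t \<in> set ?energy. 0 \<le> t"
    using edges_in by (auto simp: edges_in_def)
  ultimately have "\<forall>t \<in> set ?energy. t = 0"
    using sum_list_nonneg_eq_0_iff by blast
  then have level: "\<forall>(a, b, l) \<in> set E. \<phi> a = \<phi> b"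
    using edges_in by (fastforce simp: edges_in_def)
  have "\<phi> w = \<phi> z" if "(adj E)\<^sup>*\<^sup>* z w" for w
    using that by (induction rule: rtranclp_induct) (use level in \<open>auto simp: adj_def\<close>)
  then show ?thesis
    using connected assms(1,2,4) by (simp add: graph_connected_def)
qed

lemma is_potential_unique:
  assumes "z \<in> V" "is_potential V E z y \<phi>" "is_potential V E z y \<psi>"
  shows "\<phi> = \<psi>"
proof
  fix x
  have "\<phi> x - \<psi> x = 0" if "x \<in> V"
    by (rule harmonic_eq_0[OF assms(1) _ _ that]) (use assms(2,3) in \<open>auto simp: is_potential_def outflow_diff\<close>)
  then show "\<phi> x = \<psi> x"
    using assms(2,3) by (cases "x \<in> V") (auto simp: is_potential_def)
qed

lemma voltage_eqI:
  assumes "z \<in> V" "is_potential V E z y \<phi>"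
  shows "voltage V E z x y = \<phi> x"
proof -
  have "(THE \<phi>. is_potential V E z y \<phi>) = \<phi>"
    using assms is_potential_unique by blast
  then show ?thesis by (simp add: voltage_def)
qed

lemma voltage_source_eq_sink: "z \<in> V \<Longrightarrow> voltage V E z x z = 0"
  using voltage_eqI[OF _ is_potential_zero] by simp

lemma eff_res_self: "x \<in> V \<Longrightarrow> eff_res V E x x = 0"
  by (simp add: eff_res_def voltage_source_eq_sink)

end

definition has_potentials :: "'v set \<Rightarrow> 'v medges \<Rightarrow> bool" where
  "has_potentials V E \<longleftrightarrow> (\<forall>z\<in>V. \<forall>y\<in>V. \<exists>\<phi>. is_potential V E z y \<phi>)"

context network
begin

lemma voltage_reciprocity:
  assumes "has_potentials V E" "x \<in> V" "y \<in> V" "z \<in> V"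
  shows "voltage V E z x y = voltage V E z y x"
proof -
  obtain \<phi> \<psi> where \<phi>: "is_potential V E z x \<phi>" and \<psi>: "is_potential V E z y \<psi>"
    using assms by (meson has_potentials_def)
  show ?thesis
    unfolding voltage_eqI[OF assms(4) \<phi>] voltage_eqI[OF assms(4) \<psi>]
    using potential_reciprocity[OF finite_vertices edges_in assms(3,2,4) \<psi> \<phi>] .
qed

text \<open>Superposition: the current entering at \<open>x\<close> and leaving at \<open>y\<close> is the difference of the
  currents from \<open>x\<close> to \<open>z\<close> and from \<open>y\<close> to \<open>z\<close>.\<close>
lemma eff_res_superposition:
  assumes "has_potentials V E" "x \<in> V" "y \<in> V" "z \<in> V"
  shows "eff_res V E x y =
    voltage V E z x x - voltage V E z y x - voltage V E z x y + voltage V E z y y"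
proof -
  obtain \<phi> \<psi> where \<phi>: "is_potential V E z x \<phi>" and \<psi>: "is_potential V E z y \<psi>"
    using assms by (meson has_potentials_def)
  define \<chi> where "\<chi> v = (if v \<in> V then (\<phi> v - \<psi> v) - (\<phi> y - \<psi> y) else 0)" for v
  have "is_potential V E y x \<chi>"
    unfolding is_potential_def
  proof (intro conjI allI impI ballI)
    fix v assume "v \<in> V"
    have "outflow E \<chi> v = outflow E (\<lambda>v. 1 * (\<phi> v - \<psi> v) + (\<psi> y - \<phi> y)) v"
      by (rule outflow_cong[OF edges_in \<open>v \<in> V\<close>]) (simp add: \<chi>_def)
    also have "\<dots> = outflow E \<phi> v - outflow E \<psi> v"
      by (simp only: outflow_affine outflow_diff) simp
    finally show "outflow E \<chi> v = (if v = x then 1 else 0) - (if v = y then 1 else 0)"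
      using \<phi> \<psi> \<open>v \<in> V\<close> by (simp add: is_potential_def)
  qed (use assms in \<open>auto simp: \<chi>_def\<close>)
  then have "eff_res V E x y = \<phi> x - \<psi> x - \<phi> y + \<psi> y"
    unfolding eff_res_def using assms(2,3) by (simp add: voltage_eqI \<chi>_def)
  then show ?thesis
    by (simp add: voltage_eqI[OF assms(4) \<phi>] voltage_eqI[OF assms(4) \<psi>])
qed

lemma voltage_at_sink:
  assumes "has_potentials V E" "y \<in> V" "z \<in> V"
  shows "voltage V E z z y = 0"
proof -
  obtain \<phi> where "is_potential V E z y \<phi>"
    using assms by (meson has_potentials_def)
  then show ?thesis
    using voltage_eqI[OF assms(3)] by (simp add: is_potential_def)
qed

lemma eff_res_sym:
  assumes "has_potentials V E" "x \<in> V" "y \<in> V"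
  shows "eff_res V E x y = eff_res V E y x"
  using eff_res_superposition[OF assms assms(2)]
  by (simp add: voltage_source_eq_sink voltage_at_sink assms eff_res_def)

lemma voltage_eq_eff_res:
  assumes "has_potentials V E" "x \<in> V" "y \<in> V" "z \<in> V"
  shows "2 * voltage V E z x y = eff_res V E x z + eff_res V E y z - eff_res V E x y"
  using eff_res_superposition[OF assms] voltage_reciprocity[OF assms]
  by (simp add: eff_res_def)

end

section \<open>Deleting an edge\<close>

lemma set_del_edge: "i < length E \<Longrightarrow> set E = insert (E ! i) (set (del_edge E i))"
  by (subst id_take_nth_drop[of i E]) (auto simp: del_edge_def)

lemma set_del_edge_subset: "set (del_edge E i) \<subseteq> set E"
  by (auto simp: del_edge_def dest: in_set_takeD in_set_dropD)

lemma edges_in_del_edge: "edges_in V E \<Longrightarrow> edges_in V (del_edge E i)"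
  using set_del_edge_subset by (fastforce simp: edges_in_def)

lemma outflow_del_edge:
  assumes "i < length E" "E ! i = (u, v, L)"
  shows "outflow E \<phi> w = outflow (del_edge E i) \<phi> w
    + (if u = w then (\<phi> w - \<phi> v) / L else 0) + (if v = w then (\<phi> w - \<phi> u) / L else 0)"
proof -
  have "outflow E \<phi> w = outflow (take i E @ (u, v, L) # drop (Suc i) E) \<phi> w"
    using id_take_nth_drop[OF assms(1)] assms(2) by simp
  then show ?thesis by (simp add: outflow_append del_edge_def)
qed

lemma symp_adj: "symp (adj E)"
  unfolding symp_def adj_def by blast

lemma (in network) bridge_separates:
  assumes "i < length E" "E ! i = (u, v, L)" "v \<in> V" "\<not> graph_connected V (del_edge E i)"
  shows "\<not> (adj (del_edge E i))\<^sup>*\<^sup>* v u"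
proof
  let ?D = "del_edge E i"
  assume vu: "(adj ?D)\<^sup>*\<^sup>* v u"
  have sym: "symp (adj ?D)\<^sup>*\<^sup>*"
    by (rule symp_rtranclp[OF symp_adj])
  have step: "(adj ?D)\<^sup>*\<^sup>* x y" if "adj E x y" for x y
  proof -
    obtain a b l where ab: "(a, b, l) \<in> set E" "a = x \<and> b = y \<or> a = y \<and> b = x"
      using \<open>adj E x y\<close> by (auto simp: adj_def)
    show ?thesis
    proof (cases "(a, b, l) \<in> set ?D")
      case True
      then have "adj ?D x y" using ab(2) by (auto simp: adj_def)
      then show ?thesis by simp
    next
      case False
      then have "{x, y} = {u, v}"
        using ab set_del_edge[OF assms(1)] assms(2) by auto
      then show ?thesis
        using vu sympD[OF sym vu] by (auto simp: doubleton_eq_iff)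
    qed
  qed
  have "(adj ?D)\<^sup>*\<^sup>* x y" if "x \<in> V" "y \<in> V" for x y
  proof -
    have "(adj E)\<^sup>*\<^sup>* x y" using connected that by (simp add: graph_connected_def)
    then have "((adj ?D)\<^sup>*\<^sup>*)\<^sup>*\<^sup>* x y" by (rule mono_rtranclp[rule_format, rotated]) (use step in blast)
    then show ?thesis by simp
  qed
  then show False
    using assms(4) by (simp add: graph_connected_def)
qed

text \<open>Here \<open>\<phi> u\<close> is the resistance \<open>R\<close> between the ends of the deleted edge; putting the edge
  of length \<open>L\<close> back in parallel scales all potentials by \<open>L / (L + R)\<close>.\<close>
lemma is_potential_insert_edge:
  assumes "edges_in V E" "i < length E" "E ! i = (u, v, L)"
    and \<phi>: "is_potential V (del_edge E i) v u \<phi>" and "L + \<phi> u \<noteq> 0"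
  shows "is_potential V E v u (\<lambda>x. L / (L + \<phi> u) * \<phi> x)"
  unfolding is_potential_def
proof (intro conjI allI impI ballI)
  define s where "s = L / (L + \<phi> u)"
  have "0 < L" using assms(1-3) nth_mem by (fastforce simp: edges_in_def)
  fix w assume "w \<in> V"
  have del: "outflow (del_edge E i) (\<lambda>x. s * \<phi> x) w = s * ((if w = u then 1 else 0) - (if w = v then 1 else 0))"
    using outflow_affine[of _ s \<phi> 0] \<phi> \<open>w \<in> V\<close> by (simp add: is_potential_def)
  have "s + s * \<phi> u / L = s * (L + \<phi> u) / L"
    using \<open>0 < L\<close> by (simp add: field_simps)
  also have "\<dots> = 1"
    using \<open>0 < L\<close> assms(5) by (simp add: s_def)
  finally have "s + s * \<phi> u / L = 1" .
  then show "outflow E (\<lambda>x. L / (L + \<phi> u) * \<phi> x) w = (if w = u then 1 else 0) - (if w = v then 1 else 0)"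
    using \<phi> unfolding s_def[symmetric] outflow_del_edge[OF assms(2,3)] del
    by (cases "u = v") (auto simp: is_potential_def)
qed (use \<phi> in \<open>auto simp: is_potential_def\<close>)

lemma is_potential_bridge:
  assumes "edges_in V E" "i < length E" "E ! i = (u, v, L)" "u \<in> V"
    and sep: "\<not> (adj (del_edge E i))\<^sup>*\<^sup>* v u"
  shows "is_potential V E v u (\<lambda>x. if x \<in> V \<and> \<not> (adj (del_edge E i))\<^sup>*\<^sup>* v x then L else 0)"
    (is "is_potential V E v u ?\<psi>")
  unfolding is_potential_def
proof (intro conjI allI impI ballI)
  let ?D = "del_edge E i"
  have "0 < L" using assms(1-3) nth_mem by (fastforce simp: edges_in_def)
  have "u \<noteq> v" using sep by auto
  have "\<forall>(a, b, l) \<in> set ?D. ?\<psi> a = ?\<psi> b"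
  proof (clarify)
    fix a b l assume ab: "(a, b, l) \<in> set ?D"
    then have "adj ?D a b" "adj ?D b a" by (auto simp: adj_def)
    then have "(adj ?D)\<^sup>*\<^sup>* v a \<longleftrightarrow> (adj ?D)\<^sup>*\<^sup>* v b"
      by (meson rtranclp.rtrancl_into_rtrancl)
    moreover have "a \<in> V" "b \<in> V"
      using ab edges_in_del_edge[OF assms(1)] by (auto dest: edges_inD)
    ultimately show "?\<psi> a = ?\<psi> b" by simp
  qed
  then have "outflow ?D ?\<psi> w = 0" for w by (rule outflow_eq_0_if_level)
  then show "outflow E ?\<psi> w = (if w = u then 1 else 0) - (if w = v then 1 else 0)" for w
    unfolding outflow_del_edge[OF assms(2,3)] using \<open>0 < L\<close> \<open>u \<noteq> v\<close> assms(4) sep by auto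
qed auto

lemma Lim_bridge_term:
  assumes "L > 0"
  shows "Lim at_top (\<lambda>R. L * R\<^sup>2 / (L + R)\<^sup>2) = (L :: real)"
proof -
  have "((\<lambda>R. L * R\<^sup>2 / (L + R)\<^sup>2) \<longlongrightarrow> L) at_top" using assms by real_asymp
  then show ?thesis by (rule tendsto_Lim[rotated]) simp
qed

context network
begin

lemma voltage_swap:
  assumes "has_potentials V E" "p \<in> V" "u \<in> V" "v \<in> V"
  shows "voltage V E u p v + voltage V E v p u = eff_res V E u v"
  using voltage_eq_eff_res[OF assms(1,2,4,3)] voltage_eq_eff_res[OF assms(1,2,3,4)]
    eff_res_sym[OF assms(1,3,4)]
  by simp

lemma nth_edge:
  assumes "i < length E"
  shows "E ! i = (ep E i, eq E i, elen E i)" "ep E i \<in> V" "eq E i \<in> V" "0 < elen E i"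
proof -
  show e: "E ! i = (ep E i, eq E i, elen E i)" by (simp add: ep_def eq_def elen_def)
  show "ep E i \<in> V" "eq E i \<in> V" "0 < elen E i"
    using edges_inD[OF edges_in nth_mem[OF assms, unfolded e]] by auto
qed

lemma yterms_nonbridge:
  assumes "i < length E" "p \<in> V"
    and conn: "graph_connected V (del_edge E i)" and pot: "has_potentials V (del_edge E i)"
  shows "yterm1 V E i = (eff_res V E (ep E i) (eq E i))\<^sup>2 / elen E i \<and>
    yterm2 V E p i = (2 * voltage V E (eq E i) p (ep E i) - eff_res V E (ep E i) (eq E i))\<^sup>2 / elen E i"
proof -
  define u v L D where "u = ep E i" and "v = eq E i" and "L = elen E i" and "D = del_edge E i"
  note defs = u_def[symmetric] v_def[symmetric] L_def[symmetric] D_def[symmetric]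
  note e = nth_edge[OF assms(1), unfolded defs]
  interpret D: network V D
    using finite_vertices edges_in_del_edge[OF edges_in] conn by unfold_locales (simp_all add: D_def)
  obtain \<phi> where \<phi>: "is_potential V D v u \<phi>"
    using pot e(2,3) by (auto simp: has_potentials_def D_def)
  define R where "R = \<phi> u"
  have "0 \<le> R"
    using potential_source_nonneg[OF finite_vertices D.edges_in \<phi> e(2,3)] by (simp add: R_def)
  have "voltage V D u p v + \<phi> p = R"
    using D.voltage_swap[OF pot[unfolded defs] assms(2) e(2,3)]
    by (simp add: eff_res_def D.voltage_eqI[OF e(3) \<phi>] R_def)
  then have R_i: "R_i V E i = R" and R_b: "R_b V E i p = \<phi> p" and R_a: "R_a V E i p = R - \<phi> p"
    by (simp_all add: R_i_def R_a_def R_b_def eff_res_def defs D.voltage_eqI[OF e(3) \<phi>] R_def)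
  have "is_potential V E v u (\<lambda>x. L / (L + R) * \<phi> x)"
    using is_potential_insert_edge[OF edges_in assms(1) e(1) \<phi>[unfolded D_def]] e(4) \<open>0 \<le> R\<close>
    by (simp add: R_def)
  then have volt: "voltage V E v x u = L / (L + R) * \<phi> x" for x
    using voltage_eqI[OF e(3)] by blast
  have "L + R \<noteq> 0"
    using e(4) \<open>0 \<le> R\<close> by linarith
  then have scale: "(L / (L + R) * X)\<^sup>2 / L = L * X\<^sup>2 / (L + R)\<^sup>2" for X
    using e(4) by (simp add: power_mult_distrib power_divide power2_eq_square[of L] field_simps)
  have "yterm1 V E i = L * R\<^sup>2 / (L + R)\<^sup>2" "yterm2 V E p i = L * (2 * \<phi> p - R)\<^sup>2 / (L + R)\<^sup>2"
    using conn by (simp_all add: yterm1_def yterm2_def R_i R_a R_b defs power2_commute)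
  moreover have "2 * (L / (L + R) * \<phi> p) - L / (L + R) * R = L / (L + R) * (2 * \<phi> p - R)"
    by (simp add: algebra_simps)
  ultimately show ?thesis
    unfolding defs eff_res_def volt R_def[symmetric] by (simp only: scale)
qed

lemma yterms_bridge:
  assumes "i < length E" "p \<in> V" and bridge: "\<not> graph_connected V (del_edge E i)"
  shows "yterm1 V E i = (eff_res V E (ep E i) (eq E i))\<^sup>2 / elen E i \<and>
    yterm2 V E p i = (2 * voltage V E (eq E i) p (ep E i) - eff_res V E (ep E i) (eq E i))\<^sup>2 / elen E i"
proof -
  define u v L where "u = ep E i" and "v = eq E i" and "L = elen E i"
  note defs = u_def[symmetric] v_def[symmetric] L_def[symmetric]
  note e = nth_edge[OF assms(1), unfolded defs]
  let ?\<psi> = "\<lambda>x. if x \<in> V \<and> \<not> (adj (del_edge E i))\<^sup>*\<^sup>* v x then L else 0"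
  have sep: "\<not> (adj (del_edge E i))\<^sup>*\<^sup>* v u"
    by (rule bridge_separates[OF assms(1) e(1,3) bridge])
  have "voltage V E v x u = ?\<psi> x" for x
    by (rule voltage_eqI[OF e(3) is_potential_bridge[OF edges_in assms(1) e(1,2) sep]])
  then have "voltage V E v p u = 0 \<or> voltage V E v p u = L" "eff_res V E u v = L"
    using sep e(2) by (auto simp: eff_res_def)
  moreover have "yterm1 V E i = L" "yterm2 V E p i = L"
    using bridge Lim_bridge_term[OF e(4)] by (simp_all add: yterm1_def yterm2_def defs)
  ultimately show ?thesis
    using e(4) by (auto simp: defs power2_eq_square)
qed

lemma y_inv_eq_eff_res:
  assumes "p \<in> V" "has_potentials V E"
    and "\<And>i. graph_connected V (del_edge E i) \<Longrightarrow> has_potentials V (del_edge E i)"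
  shows "y_inv V E p =
    1/4 * (\<Sum>i<length E. (eff_res V E (ep E i) (eq E i))\<^sup>2 / elen E i) +
    3/4 * (\<Sum>i<length E. (eff_res V E p (ep E i) - eff_res V E p (eq E i))\<^sup>2 / elen E i)"
proof -
  have "yterm1 V E i = (eff_res V E (ep E i) (eq E i))\<^sup>2 / elen E i \<and>
      yterm2 V E p i = (eff_res V E p (ep E i) - eff_res V E p (eq E i))\<^sup>2 / elen E i"
    if i: "i < length E" for i
  proof -
    have "2 * voltage V E (eq E i) p (ep E i) - eff_res V E (ep E i) (eq E i)
        = eff_res V E p (eq E i) - eff_res V E p (ep E i)"
      using voltage_eq_eff_res[OF assms(2,1) nth_edge(2,3)[OF i]] by simp
    then show ?thesis
      using yterms_nonbridge[OF i assms(1)] yterms_bridge[OF i assms(1)] assms(3)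
      by (cases "graph_connected V (del_edge E i)") (auto simp: power2_commute)
  qed
  then show ?thesis by (simp add: y_inv_def)
qed

end

section \<open>Conductances\<close>

definition cond :: "'v medges \<Rightarrow> 'v \<Rightarrow> 'v \<Rightarrow> real" where
  "cond E x y = (\<Sum>(a, b, l)\<leftarrow>E. if a = x \<and> b = y \<or> a = y \<and> b = x then 1 / l else 0)"

lemma cond_Nil [simp]: "cond [] x y = 0"
  by (simp add: cond_def)

lemma cond_Cons [simp]:
  "cond ((a, b, l) # E) x y = (if a = x \<and> b = y \<or> a = y \<and> b = x then 1 / l else 0) + cond E x y"
  by (simp add: cond_def)

lemma cond_sym: "cond E x y = cond E y x"
  by (induction E) auto

lemma cond_nonneg: "edges_in V E \<Longrightarrow> 0 \<le> cond E x y"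
  by (induction E) (auto simp: edges_in_def)

lemma cond_pos_if_adj:
  assumes "edges_in V E" "adj E x y"
  shows "0 < cond E x y"
  using assms
proof (induction E)
  case (Cons e E)
  obtain a b l where e: "e = (a, b, l)" by (cases e)
  have "edges_in V E" "0 < l" using Cons.prems(1) by (auto simp: e edges_in_def)
  then show ?case
    using Cons cond_nonneg[of V E x y] by (auto simp: e adj_def add_pos_nonneg add_nonneg_pos)
qed (simp add: adj_def)

lemma if_zero_mult: "(if P then x else 0) * t = (if P then x * t else (0 :: real))"
  by simp

lemma outflow_eq_sum_cond:
  assumes "finite V" "edges_in V E" "v \<in> V"
  shows "outflow E \<phi> v = (\<Sum>w\<in>V. cond E v w * (\<phi> v - \<phi> w))"
  using assms(2)
proof (induction E)
  case (Cons e E)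
  obtain a b l where e: "e = (a, b, l)" by (cases e)
  have ab: "a \<in> V" "b \<in> V" using Cons.prems by (auto simp: e edges_in_def)
  have "(\<Sum>w\<in>V. (if a = v \<and> b = w \<or> a = w \<and> b = v then 1 / l else 0) * (\<phi> v - \<phi> w))
      = (if a = v then (\<phi> v - \<phi> b) / l else 0) + (if b = v then (\<phi> v - \<phi> a) / l else 0)"
    using assms(1) ab by (cases "a = v"; cases "b = v") (auto simp: if_zero_mult)
  then show ?case
    using Cons by (simp add: e edges_in_def distrib_right sum.distrib)
qed simp

lemma sum_edges_eq_sum_cond:
  assumes "finite V" "edges_in V E"
    and sym: "\<And>x y. x \<in> V \<Longrightarrow> y \<in> V \<Longrightarrow> g y x = g x y" and diag: "\<And>x. x \<in> V \<Longrightarrow> g x x = 0"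
  shows "(\<Sum>(a, b, l)\<leftarrow>E. g a b / l) = (\<Sum>x\<in>V. \<Sum>y\<in>V. cond E x y * g x y) / 2"
  using assms(2)
proof (induction E)
  case (Cons e E)
  obtain a b l where e: "e = (a, b, l)" by (cases e)
  have ab: "a \<in> V" "b \<in> V" using Cons.prems by (auto simp: e edges_in_def)
  have "(\<Sum>y\<in>V. (if a = x \<and> b = y \<or> a = y \<and> b = x then 1 / l else 0) * g x y)
      = (if x = a then g a b / l else 0) + (if x = b then g a b / l else 0)"
    if "x \<in> V" for x
    using assms(1) ab that sym diag by (cases "x = a"; cases "x = b") (auto simp: if_zero_mult)
  then have "(\<Sum>x\<in>V. \<Sum>y\<in>V. (if a = x \<and> b = y \<or> a = y \<and> b = x then 1 / l else 0) * g x y) = 2 * (g a b / l)"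
    using assms(1) ab by (simp add: sum.distrib)
  then show ?case
    using Cons by (simp add: e edges_in_def distrib_right sum.distrib add_divide_distrib)
qed simp

lemma sum_nth_edges: "(\<Sum>i<length E. f (ep E i) (eq E i) (elen E i)) = (\<Sum>(a, b, l)\<leftarrow>E. f a b l)"
  by (simp add: sum_list_sum_nth atLeast0LessThan ep_def eq_def elen_def split_beta)

lemma (in network) cut_cond_pos:
  assumes "x \<in> S" "x \<in> V" "y \<in> V" "y \<notin> S"
  shows "\<exists>u\<in>S. \<exists>w\<in>V - S. 0 < cond E u w"
proof (rule ccontr)
  assume no_edge: "\<not> ?thesis"
  have "z \<in> S" if "(adj E)\<^sup>*\<^sup>* x z" for z
    using that
  proof (induction rule: rtranclp_induct)
    case (step z z')
    then have "z' \<in> V"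
      using edges_in by (auto simp: adj_def edges_in_def)
    then show ?case
      using no_edge step cond_pos_if_adj[OF edges_in] by blast
  qed (rule assms(1))
  then show False
    using connected assms by (auto simp: graph_connected_def)
qed

lemma (in network) y_inv_eq_sum_cond:
  assumes "p \<in> V" "has_potentials V E"
    and "\<And>i. graph_connected V (del_edge E i) \<Longrightarrow> has_potentials V (del_edge E i)"
  shows "y_inv V E p = 1/4 * ((\<Sum>x\<in>V. \<Sum>z\<in>V. cond E x z * (eff_res V E x z)\<^sup>2) / 2)
    + 3/4 * ((\<Sum>x\<in>V. \<Sum>z\<in>V. cond E x z * (eff_res V E p x - eff_res V E p z)\<^sup>2) / 2)"
proof -
  have edge_sum: "(\<Sum>i<length E. g (ep E i) (eq E i) / elen E i) = (\<Sum>x\<in>V. \<Sum>z\<in>V. cond E x z * g x z) / 2"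
    if "\<And>x z. x \<in> V \<Longrightarrow> z \<in> V \<Longrightarrow> g z x = g x z" "\<And>x. x \<in> V \<Longrightarrow> g x x = 0" for g
    using sum_nth_edges[of "\<lambda>a b l. g a b / l" E] sum_edges_eq_sum_cond[OF finite_vertices edges_in that]
    by simp
  have "(\<Sum>i<length E. (eff_res V E (ep E i) (eq E i))\<^sup>2 / elen E i)
      = (\<Sum>x\<in>V. \<Sum>z\<in>V. cond E x z * (eff_res V E x z)\<^sup>2) / 2"
    by (rule edge_sum) (simp_all add: eff_res_sym[OF assms(2)] eff_res_self)
  moreover have "(\<Sum>i<length E. (eff_res V E p (ep E i) - eff_res V E p (eq E i))\<^sup>2 / elen E i)
      = (\<Sum>x\<in>V. \<Sum>z\<in>V. cond E x z * (eff_res V E p x - eff_res V E p z)\<^sup>2) / 2"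
    by (rule edge_sum) (simp_all add: power2_commute)
  ultimately show ?thesis
    using y_inv_eq_eff_res[OF assms] by simp
qed

section \<open>Networks on four vertices\<close>

definition spanning_trees :: "('v \<Rightarrow> 'v \<Rightarrow> real) \<Rightarrow> 'v \<Rightarrow> 'v \<Rightarrow> 'v \<Rightarrow> 'v \<Rightarrow> real" where
  "spanning_trees K A B C D =
     K A B * K A C * K A D + K A B * K A C * K B D + K A B * K A C * K C D + K A B * K A D * K B C
   + K A B * K A D * K C D + K A B * K B C * K B D + K A B * K B C * K C D + K A B * K B D * K C D
   + K A C * K A D * K B C + K A C * K A D * K B D + K A C * K B C * K B D + K A C * K B C * K C D
   + K A C * K B D * K C D + K A D * K B C * K B D + K A D * K B C * K C D + K A D * K B D * K C D"

definition separating_forests :: "('v \<Rightarrow> 'v \<Rightarrow> real) \<Rightarrow> 'v \<Rightarrow> 'v \<Rightarrow> 'v \<Rightarrow> 'v \<Rightarrow> real" where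
  "separating_forests K A B C D =
     K A B * K A C + K A B * K B C + K A B * K C D + K A C * K B C
   + K A C * K B D + K B C * K B D + K B C * K C D + K B D * K C D"

text \<open>Kirchhoff's formula for a unit current from \<open>A\<close> to \<open>D\<close> on the complete graph with
  conductances \<open>K\<close>: the potential at \<open>x\<close> is the number of spanning 2-forests separating \<open>D\<close>
  from \<open>A\<close> and \<open>x\<close>, divided by the number of spanning trees (all counted with weights).\<close>
definition kirchhoff_numerator :: "('v \<Rightarrow> 'v \<Rightarrow> real) \<Rightarrow> 'v \<Rightarrow> 'v \<Rightarrow> 'v \<Rightarrow> 'v \<Rightarrow> 'v \<Rightarrow> real" where
  "kirchhoff_numerator K A B C D x =
     (if x = A then separating_forests K A B C D
      else if x = B then K A B * K A C + K A B * K B C + K A B * K C D + K A C * K B C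
      else if x = C then K A B * K A C + K A B * K B C + K A C * K B C + K A C * K B D
      else 0)"

definition kirchhoff_potential :: "('v \<Rightarrow> 'v \<Rightarrow> real) \<Rightarrow> 'v \<Rightarrow> 'v \<Rightarrow> 'v \<Rightarrow> 'v \<Rightarrow> 'v \<Rightarrow> real" where
  "kirchhoff_potential K A B C D x = kirchhoff_numerator K A B C D x / spanning_trees K A B C D"

lemma card4_enum:
  assumes "card V = 4" "x \<in> V" "y \<in> V" "x \<noteq> y"
  obtains B C where "V = {x, B, C, y}" "distinct [x, B, C, y]"
proof -
  have "finite V" using assms(1) card.infinite by force
  then have "card (V - {x, y}) = 2" using assms by (simp add: card_Diff_subset)
  then obtain B C where BC: "V - {x, y} = {B, C}" "B \<noteq> C" by (auto simp: card_2_iff)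
  then have "V = {x, B, C, y}" "distinct [x, B, C, y]" using assms(2-4) by auto
  then show thesis by (rule that)
qed

context network
begin

lemma spanning_trees_pos:
  assumes V: "V = {A, B, C, D}" and dist: "distinct [A, B, C, D]"
  shows "0 < spanning_trees (cond E) A B C D"
proof -
  let ?K = "cond E"
  have Ks: "?K B A = ?K A B" "?K C A = ?K A C" "?K D A = ?K A D" "?K C B = ?K B C" "?K D B = ?K B D" "?K D C = ?K C D"
    by (simp_all add: cond_sym)
  have nonneg: "0 \<le> ?K x y" for x y by (rule cond_nonneg[OF edges_in])
  have cut: "\<exists>u\<in>S. \<exists>w\<in>V - S. ?K u w \<noteq> 0" if "x \<in> S" "x \<in> V" "y \<in> V" "y \<notin> S" for S x y
    using cut_cond_pos[OF that] by force
  txt \<open>Each of the seven cuts of \<open>V\<close> is crossed by an edge of nonzero conductance, so one of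
    the sixteen spanning trees has only such edges.\<close>
  have "?K A B \<noteq> 0 \<or> ?K A C \<noteq> 0 \<or> ?K A D \<noteq> 0" "?K A B \<noteq> 0 \<or> ?K B C \<noteq> 0 \<or> ?K B D \<noteq> 0"
    "?K A C \<noteq> 0 \<or> ?K B C \<noteq> 0 \<or> ?K C D \<noteq> 0" "?K A D \<noteq> 0 \<or> ?K B D \<noteq> 0 \<or> ?K C D \<noteq> 0"
    "?K A C \<noteq> 0 \<or> ?K A D \<noteq> 0 \<or> ?K B C \<noteq> 0 \<or> ?K B D \<noteq> 0"
    "?K A B \<noteq> 0 \<or> ?K A D \<noteq> 0 \<or> ?K B C \<noteq> 0 \<or> ?K C D \<noteq> 0"
    "?K A B \<noteq> 0 \<or> ?K A C \<noteq> 0 \<or> ?K B D \<noteq> 0 \<or> ?K C D \<noteq> 0"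
    using cut[of A "{A}" B] cut[of B "{B}" A] cut[of C "{C}" A] cut[of D "{D}" A]
      cut[of A "{A, B}" C] cut[of A "{A, C}" B] cut[of A "{A, D}" B] V dist
    by (auto simp: Ks)
  moreover have "spanning_trees ?K A B C D \<noteq> 0"
    using calculation by (simp add: spanning_trees_def add_nonneg_eq_0_iff nonneg) argo
  moreover have "0 \<le> spanning_trees ?K A B C D"
    by (simp add: spanning_trees_def nonneg)
  ultimately show ?thesis by force
qed

lemma is_potential_kirchhoff:
  assumes V: "V = {A, B, C, D}" and dist: "distinct [A, B, C, D]"
  shows "is_potential V E D A (kirchhoff_potential (cond E) A B C D)"
  unfolding is_potential_def
proof (intro conjI allI impI ballI)
  let ?K = "cond E" and ?N = "kirchhoff_numerator (cond E) A B C D"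
  define T where "T = spanning_trees ?K A B C D"
  have Ks: "?K B A = ?K A B" "?K C A = ?K A C" "?K D A = ?K A D" "?K C B = ?K B C" "?K D B = ?K B D" "?K D C = ?K C D"
    by (simp_all add: cond_sym)
  fix v assume "v \<in> V"
  have "outflow E (kirchhoff_potential ?K A B C D) v = (\<Sum>w\<in>V. ?K v w * (?N v - ?N w)) / T"
    by (simp add: outflow_eq_sum_cond[OF finite_vertices edges_in \<open>v \<in> V\<close>] kirchhoff_potential_def
        T_def[symmetric] sum_divide_distrib diff_divide_distrib[symmetric])
  moreover have "(\<Sum>w\<in>V. ?K v w * (?N v - ?N w)) = T * ((if v = A then 1 else 0) - (if v = D then 1 else 0))"
    using \<open>v \<in> V\<close> V dist
    by (auto simp: kirchhoff_numerator_def T_def spanning_trees_def separating_forests_def Ks algebra_simps)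
  moreover have "T \<noteq> 0" using spanning_trees_pos[OF assms] by (simp add: T_def)
  ultimately show "outflow E (kirchhoff_potential ?K A B C D) v = (if v = A then 1 else 0) - (if v = D then 1 else 0)"
    by simp
qed (use V dist in \<open>auto simp: kirchhoff_potential_def kirchhoff_numerator_def\<close>)

lemma has_potentials_card4:
  assumes "card V = 4"
  shows "has_potentials V E"
  unfolding has_potentials_def
proof (intro ballI)
  fix z y assume "z \<in> V" "y \<in> V"
  show "\<exists>\<phi>. is_potential V E z y \<phi>"
  proof (cases "z = y")
    case True
    then show ?thesis using is_potential_zero[of V E y] by auto
  next
    case False
    then obtain B C where "V = {y, B, C, z}" "distinct [y, B, C, z]"
      using card4_enum[OF assms \<open>y \<in> V\<close> \<open>z \<in> V\<close>] by metis
    then show ?thesis using is_potential_kirchhoff by blast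
  qed
qed

lemma eff_res_card4:
  assumes "V = {A, B, C, D}" "distinct [A, B, C, D]"
  shows "eff_res V E A D = separating_forests (cond E) A B C D / spanning_trees (cond E) A B C D"
  using voltage_eqI[OF _ is_potential_kirchhoff[OF assms], of A] assms
  by (simp add: eff_res_def kirchhoff_potential_def kirchhoff_numerator_def)

end

text \<open>The edges \<open>AB, AC, AD, BC, BD, CD\<close> of \<open>K\<^sub>4\<close> are numbered 1 to 6: \<open>c\<^sub>i\<close> is the
  conductance of edge \<open>i\<close>, \<open>T\<close> the spanning-tree polynomial and \<open>F\<^sub>i\<close> the 2-forest polynomial of
  edge \<open>i\<close>. Multiplied by \<open>T\<^sup>2\<close>, the gaps \<open>Kf - 3 y\<close> and \<open>4 y - Kf\<close> of the theorem become
  the following polynomials with nonnegative coefficients.\<close>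
definition K4_lower_gap :: "real \<Rightarrow> real \<Rightarrow> real \<Rightarrow> real \<Rightarrow> real \<Rightarrow> real \<Rightarrow> real" where
  "K4_lower_gap c1 c2 c3 c4 c5 c6 =
    c1^2*c2*c3*c6 + c1^2*c2*c5*c6 + c1^2*c2*c6^2 + c1^2*c3*c4*c6 + c1^2*c3*c6^2 + c1^2*c4*c5*c6 + c1^2*c4*c6^2
    + c1^2*c5*c6^2 + c1*c2^2*c3*c5 + c1*c2^2*c5^2 + c1*c2^2*c5*c6 + c1*c2*c3^2*c4 + 2*c1*c2*c3*c4*c5 + 2*c1*c2*c3*c4*c6
    + 2*c1*c2*c3*c5*c6 + c1*c2*c4*c5^2 + 2*c1*c2*c4*c5*c6 + c1*c2*c4*c6^2 + c1*c2*c5^2*c6 + c1*c2*c5*c6^2 + c1*c3^2*c4^2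
    + c1*c3^2*c4*c6 + c1*c3*c4^2*c5 + c1*c3*c4^2*c6 + 2*c1*c3*c4*c5*c6 + c1*c3*c4*c6^2 + c1*c3*c5*c6^2 + c2^2*c3*c4*c5
    + c2^2*c3*c5^2 + c2^2*c4*c5^2 + c2^2*c4*c5*c6 + c2^2*c5^2*c6 + c2*c3^2*c4^2 + c2*c3^2*c4*c5 + c2*c3*c4^2*c5
    + c2*c3*c4^2*c6 + c2*c3*c4*c5^2 + 2*c2*c3*c4*c5*c6 + c2*c3*c5^2*c6 + c3^2*c4^2*c5 + c3^2*c4^2*c6 + c3^2*c4*c5*c6"

definition K4_upper_gap :: "real \<Rightarrow> real \<Rightarrow> real \<Rightarrow> real \<Rightarrow> real \<Rightarrow> real \<Rightarrow> real" where
  "K4_upper_gap c1 c2 c3 c4 c5 c6 =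
    c1^2*c2^2*c3 + c1^2*c2^2*c5 + c1^2*c2^2*c6 + c1^2*c2*c3^2 + 2*c1^2*c2*c3*c4 + 2*c1^2*c2*c3*c5 + 2*c1^2*c2*c3*c6
    + 2*c1^2*c2*c4*c5 + 2*c1^2*c2*c4*c6 + c1^2*c2*c5^2 + 2*c1^2*c2*c5*c6 + c1^2*c3^2*c4 + c1^2*c3^2*c6 + c1^2*c3*c4^2
    + 2*c1^2*c3*c4*c5 + 2*c1^2*c3*c4*c6 + 2*c1^2*c3*c5*c6 + c1^2*c4^2*c5 + c1^2*c4^2*c6 + c1^2*c4*c5^2 + 2*c1^2*c4*c5*c6
    + c1^2*c5^2*c6 + c1*c2^2*c3^2 + 2*c1*c2^2*c3*c4 + 2*c1*c2^2*c3*c5 + 2*c1*c2^2*c3*c6 + 2*c1*c2^2*c4*c5 + 2*c1*c2^2*c4*c6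
    + 2*c1*c2^2*c5*c6 + c1*c2^2*c6^2 + 2*c1*c2*c3^2*c4 + 2*c1*c2*c3^2*c5 + 2*c1*c2*c3^2*c6 + 2*c1*c2*c3*c4^2 + 6*c1*c2*c3*c4*c5
    + 6*c1*c2*c3*c4*c6 + 2*c1*c2*c3*c5^2 + 6*c1*c2*c3*c5*c6 + 2*c1*c2*c3*c6^2 + 2*c1*c2*c4^2*c5 + 2*c1*c2*c4^2*c6 + 2*c1*c2*c4*c5^2
    + 6*c1*c2*c4*c5*c6 + 2*c1*c2*c4*c6^2 + 2*c1*c2*c5^2*c6 + 2*c1*c2*c5*c6^2 + 2*c1*c3^2*c4*c5 + 2*c1*c3^2*c4*c6 + 2*c1*c3^2*c5*c6
    + c1*c3^2*c6^2 + 2*c1*c3*c4^2*c5 + 2*c1*c3*c4^2*c6 + 2*c1*c3*c4*c5^2 + 6*c1*c3*c4*c5*c6 + 2*c1*c3*c4*c6^2 + 2*c1*c3*c5^2*c6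
    + 2*c1*c3*c5*c6^2 + c1*c4^2*c5^2 + 2*c1*c4^2*c5*c6 + c1*c4^2*c6^2 + 2*c1*c4*c5^2*c6 + 2*c1*c4*c5*c6^2 + c1*c5^2*c6^2
    + c2^2*c3^2*c4 + c2^2*c3^2*c5 + c2^2*c3*c4^2 + 2*c2^2*c3*c4*c5 + 2*c2^2*c3*c4*c6 + 2*c2^2*c3*c5*c6 + c2^2*c4^2*c5
    + c2^2*c4^2*c6 + 2*c2^2*c4*c5*c6 + c2^2*c4*c6^2 + c2^2*c5*c6^2 + 2*c2*c3^2*c4*c5 + 2*c2*c3^2*c4*c6 + c2*c3^2*c5^2
    + 2*c2*c3^2*c5*c6 + 2*c2*c3*c4^2*c5 + 2*c2*c3*c4^2*c6 + 2*c2*c3*c4*c5^2 + 6*c2*c3*c4*c5*c6 + 2*c2*c3*c4*c6^2 + 2*c2*c3*c5^2*c6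
    + 2*c2*c3*c5*c6^2 + c2*c4^2*c5^2 + 2*c2*c4^2*c5*c6 + c2*c4^2*c6^2 + 2*c2*c4*c5^2*c6 + 2*c2*c4*c5*c6^2 + c2*c5^2*c6^2
    + c3^2*c4*c5^2 + 2*c3^2*c4*c5*c6 + c3^2*c4*c6^2 + c3^2*c5^2*c6 + c3^2*c5*c6^2 + c3*c4^2*c5^2 + 2*c3*c4^2*c5*c6
    + c3*c4^2*c6^2 + 2*c3*c4*c5^2*c6 + 2*c3*c4*c5*c6^2 + c3*c5^2*c6^2"

lemma K4_gaps_nonneg:
  assumes "0 \<le> c1" "0 \<le> c2" "0 \<le> c3" "0 \<le> c4" "0 \<le> c5" "0 \<le> c6"
  shows "0 \<le> K4_lower_gap c1 c2 c3 c4 c5 c6" "0 \<le> K4_upper_gap c1 c2 c3 c4 c5 c6"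
  unfolding K4_lower_gap_def K4_upper_gap_def
  using assms by (intro add_nonneg_nonneg mult_nonneg_nonneg zero_le_power; simp)+

lemma K4_gap_identities:
  fixes c1 c2 c3 c4 c5 c6 T F1 F2 F3 F4 F5 F6 :: real
  assumes T: "T = c1*c2*c3 + c1*c2*c5 + c1*c2*c6 + c1*c3*c4 + c1*c3*c6 + c1*c4*c5 + c1*c4*c6 + c1*c5*c6
      + c2*c3*c4 + c2*c3*c5 + c2*c4*c5 + c2*c4*c6 + c2*c5*c6 + c3*c4*c5 + c3*c4*c6 + c3*c5*c6"
    and F: "F1 = c2*c3 + c2*c5 + c2*c6 + c3*c4 + c3*c6 + c4*c5 + c4*c6 + c5*c6"
      "F2 = c1*c3 + c1*c5 + c1*c6 + c3*c4 + c3*c5 + c4*c5 + c4*c6 + c5*c6"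
      "F3 = c1*c2 + c1*c4 + c1*c6 + c2*c4 + c2*c5 + c4*c5 + c4*c6 + c5*c6"
      "F4 = c1*c3 + c1*c5 + c1*c6 + c2*c3 + c2*c5 + c2*c6 + c3*c5 + c3*c6"
      "F5 = c1*c2 + c1*c4 + c1*c6 + c2*c3 + c2*c4 + c2*c6 + c3*c4 + c3*c6"
      "F6 = c1*c2 + c1*c3 + c1*c4 + c1*c5 + c2*c4 + c2*c5 + c3*c4 + c3*c5"
  defines "D3 \<equiv> K4_lower_gap c1 c2 c3 c4 c5 c6" and "D4 \<equiv> K4_upper_gap c1 c2 c3 c4 c5 c6"
  shows "T * (F1 + F2 + F3 + F4 + F5 + F6) = 4 * D3 + 3 * D4"
    and "c1 * F1\<^sup>2 + c2 * F2\<^sup>2 + c3 * F3\<^sup>2 + c4 * F4\<^sup>2 + c5 * F5\<^sup>2 + c6 * F6\<^sup>2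
      + 3 * (c1 * F1\<^sup>2 + c2 * F2\<^sup>2 + c3 * F3\<^sup>2 + c4 * (F1 - F2)\<^sup>2 + c5 * (F1 - F3)\<^sup>2 + c6 * (F2 - F3)\<^sup>2)
      = 4 * D3 + 4 * D4"
  unfolding T F D3_def D4_def K4_lower_gap_def K4_upper_gap_def
  by (simp_all add: algebra_simps power2_eq_square)

lemma K4_resistance_bounds:
  fixes c1 c2 c3 c4 c5 c6 T F1 F2 F3 F4 F5 F6 r1 r2 r3 r4 r5 r6 :: real
  assumes nonneg: "0 \<le> c1" "0 \<le> c2" "0 \<le> c3" "0 \<le> c4" "0 \<le> c5" "0 \<le> c6" and "0 < T"
    and T: "T = c1*c2*c3 + c1*c2*c5 + c1*c2*c6 + c1*c3*c4 + c1*c3*c6 + c1*c4*c5 + c1*c4*c6 + c1*c5*c6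
      + c2*c3*c4 + c2*c3*c5 + c2*c4*c5 + c2*c4*c6 + c2*c5*c6 + c3*c4*c5 + c3*c4*c6 + c3*c5*c6"
    and F: "F1 = c2*c3 + c2*c5 + c2*c6 + c3*c4 + c3*c6 + c4*c5 + c4*c6 + c5*c6"
      "F2 = c1*c3 + c1*c5 + c1*c6 + c3*c4 + c3*c5 + c4*c5 + c4*c6 + c5*c6"
      "F3 = c1*c2 + c1*c4 + c1*c6 + c2*c4 + c2*c5 + c4*c5 + c4*c6 + c5*c6"
      "F4 = c1*c3 + c1*c5 + c1*c6 + c2*c3 + c2*c5 + c2*c6 + c3*c5 + c3*c6"
      "F5 = c1*c2 + c1*c4 + c1*c6 + c2*c3 + c2*c4 + c2*c6 + c3*c4 + c3*c6"
      "F6 = c1*c2 + c1*c3 + c1*c4 + c1*c5 + c2*c4 + c2*c5 + c3*c4 + c3*c5"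
    and r: "r1 = F1 / T" "r2 = F2 / T" "r3 = F3 / T" "r4 = F4 / T" "r5 = F5 / T" "r6 = F6 / T"
  defines "y \<equiv> 1/4 * (c1 * r1\<^sup>2 + c2 * r2\<^sup>2 + c3 * r3\<^sup>2 + c4 * r4\<^sup>2 + c5 * r5\<^sup>2 + c6 * r6\<^sup>2)
      + 3/4 * (c1 * r1\<^sup>2 + c2 * r2\<^sup>2 + c3 * r3\<^sup>2 + c4 * (r1 - r2)\<^sup>2 + c5 * (r1 - r3)\<^sup>2 + c6 * (r2 - r3)\<^sup>2)"
    and "kf \<equiv> r1 + r2 + r3 + r4 + r5 + r6"
  shows "3 * y \<le> kf \<and> kf \<le> 4 * y"
proof -
  let ?D3 = "K4_lower_gap c1 c2 c3 c4 c5 c6" and ?D4 = "K4_upper_gap c1 c2 c3 c4 c5 c6"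
  note gaps = K4_gap_identities[OF T F]
  have T_r: "T * r1 = F1" "T * r2 = F2" "T * r3 = F3" "T * r4 = F4" "T * r5 = F5" "T * r6 = F6"
    using \<open>0 < T\<close> by (simp_all add: r)
  have "T * kf = F1 + F2 + F3 + F4 + F5 + F6"
    unfolding kf_def T_r[symmetric] by (simp add: algebra_simps)
  then have kf: "T\<^sup>2 * kf = 4 * ?D3 + 3 * ?D4"
    using gaps(1) by (simp add: power2_eq_square mult.assoc)
  have "4 * (T\<^sup>2 * y) = c1 * (T * r1)\<^sup>2 + c2 * (T * r2)\<^sup>2 + c3 * (T * r3)\<^sup>2 + c4 * (T * r4)\<^sup>2
      + c5 * (T * r5)\<^sup>2 + c6 * (T * r6)\<^sup>2 + 3 * (c1 * (T * r1)\<^sup>2 + c2 * (T * r2)\<^sup>2 + c3 * (T * r3)\<^sup>2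
      + c4 * (T * r1 - T * r2)\<^sup>2 + c5 * (T * r1 - T * r3)\<^sup>2 + c6 * (T * r2 - T * r3)\<^sup>2)"
    unfolding y_def by (simp add: algebra_simps power2_eq_square)
  then have y: "T\<^sup>2 * y = ?D3 + ?D4"
    using gaps(2) unfolding T_r by simp
  have "0 \<le> T\<^sup>2 * (kf - 3 * y)" "0 \<le> T\<^sup>2 * (4 * y - kf)"
    using K4_gaps_nonneg[OF nonneg] by (simp_all add: right_diff_distrib mult.left_commute[of "T\<^sup>2"] kf y)
  then show ?thesis
    using \<open>0 < T\<close> by (simp add: zero_le_mult_iff)
qed

lemma K4_Kf_y_bounds:
  fixes K r :: "'v \<Rightarrow> 'v \<Rightarrow> real" and A B C D :: 'v
  defines "S \<equiv> {A, B, C, D}"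
  assumes dist: "distinct [A, B, C, D]"
    and K_sym: "\<And>x y. K x y = K y x" and K_nonneg: "\<And>x y. 0 \<le> K x y"
    and T_pos: "0 < spanning_trees K A B C D"
    and r: "\<And>x u w z. {x, u, w, z} = S \<Longrightarrow> distinct [x, u, w, z] \<Longrightarrow>
      r x z = separating_forests K x u w z / spanning_trees K x u w z"
    and r_sym: "\<And>x z. x \<in> S \<Longrightarrow> z \<in> S \<Longrightarrow> r x z = r z x"
    and r_self: "\<And>x. x \<in> S \<Longrightarrow> r x x = 0"
  defines "y \<equiv> 1/4 * ((\<Sum>x\<in>S. \<Sum>z\<in>S. K x z * (r x z)\<^sup>2) / 2)
      + 3/4 * ((\<Sum>x\<in>S. \<Sum>z\<in>S. K x z * (r A x - r A z)\<^sup>2) / 2)"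
    and "kf \<equiv> 1/2 * (\<Sum>x\<in>S. \<Sum>z\<in>S. r x z)"
  shows "3 * y \<le> kf \<and> kf \<le> 4 * y"
proof -
  have Ks: "K B A = K A B" "K C A = K A C" "K D A = K A D" "K C B = K B C" "K D B = K B D" "K D C = K C D"
    using K_sym by auto
  have rs: "r B A = r A B" "r C A = r A C" "r D A = r A D" "r C B = r B C" "r D B = r B D" "r D C = r C D"
    using r_sym by (auto simp: S_def)
  have r0: "r A A = 0" "r B B = 0" "r C C = 0" "r D D = 0"
    using r_self by (auto simp: S_def)
  have r_K4: "r x z = separating_forests K x u w z / spanning_trees K A B C D"
    if "(x, u, w, z) \<in> {(A, C, D, B), (A, B, D, C), (A, B, C, D), (B, A, D, C), (B, A, C, D), (C, A, B, D)}"
    for x u w z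
  proof -
    have "{x, u, w, z} = S" "distinct [x, u, w, z]"
      using that dist by (auto simp: S_def)
    moreover have "spanning_trees K x u w z = spanning_trees K A B C D"
      using that by (auto simp: spanning_trees_def Ks algebra_simps)
    ultimately show ?thesis
      using r by simp
  qed
  note bounds = K4_resistance_bounds[of "K A B" "K A C" "K A D" "K B C" "K B D" "K C D"
      "spanning_trees K A B C D" "separating_forests K A C D B" "separating_forests K A B D C"
      "separating_forests K A B C D" "separating_forests K B A D C" "separating_forests K B A C D"
      "separating_forests K C A B D", OF K_nonneg K_nonneg K_nonneg K_nonneg K_nonneg K_nonneg T_pos
      _ _ _ _ _ _ _ r_K4[of A C D B] r_K4[of A B D C] r_K4[of A B C D] r_K4[of B A D C] r_K4[of B A C D]
      r_K4[of C A B D]]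
  have sq: "(r A C - r A B)\<^sup>2 = (r A B - r A C)\<^sup>2" "(r A D - r A B)\<^sup>2 = (r A B - r A D)\<^sup>2"
    "(r A D - r A C)\<^sup>2 = (r A C - r A D)\<^sup>2"
    by (simp_all add: power2_commute)
  have y: "y = 1/4 * (K A B * (r A B)\<^sup>2 + K A C * (r A C)\<^sup>2 + K A D * (r A D)\<^sup>2 + K B C * (r B C)\<^sup>2
      + K B D * (r B D)\<^sup>2 + K C D * (r C D)\<^sup>2) + 3/4 * (K A B * (r A B)\<^sup>2 + K A C * (r A C)\<^sup>2
      + K A D * (r A D)\<^sup>2 + K B C * (r A B - r A C)\<^sup>2 + K B D * (r A B - r A D)\<^sup>2 + K C D * (r A C - r A D)\<^sup>2)"
    using dist by (simp add: y_def S_def Ks rs r0 sq field_simps)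
  have kf: "kf = r A B + r A C + r A D + r B C + r B D + r C D"
    using dist by (simp add: kf_def S_def rs r0)
  show ?thesis
    unfolding y kf by (rule bounds) (simp_all add: spanning_trees_def separating_forests_def Ks algebra_simps)
qed

lemma (in network) Kf_y_bounds_card4:
  assumes V: "V = {A, B, C, D}" and dist: "distinct [A, B, C, D]"
  defines "y \<equiv> 1/4 * ((\<Sum>x\<in>V. \<Sum>z\<in>V. cond E x z * (eff_res V E x z)\<^sup>2) / 2)
      + 3/4 * ((\<Sum>x\<in>V. \<Sum>z\<in>V. cond E x z * (eff_res V E A x - eff_res V E A z)\<^sup>2) / 2)"
    and "kf \<equiv> 1/2 * (\<Sum>x\<in>V. \<Sum>z\<in>V. eff_res V E x z)"
  shows "3 * y \<le> kf \<and> kf \<le> 4 * y"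
  unfolding y_def kf_def
proof (rule K4_Kf_y_bounds[where K = "cond E" and r = "eff_res V E" and A = A and B = B and C = C
      and D = D, folded V])
  show "eff_res V E x z = separating_forests (cond E) x u w z / spanning_trees (cond E) x u w z"
    if "{x, u, w, z} = V" "distinct [x, u, w, z]" for x u w z
    using eff_res_card4[OF that(1)[symmetric] that(2)] .
  have "has_potentials V E"
    using has_potentials_card4 V dist by simp
  then show "eff_res V E x z = eff_res V E z x" if "x \<in> V" "z \<in> V" for x z
    using eff_res_sym that by blast
qed (use dist spanning_trees_pos[OF V dist] cond_sym cond_nonneg[OF edges_in] eff_res_self in auto)

theorem lemma3p16:
  fixes V :: "'v set" and E :: "'v medges" and p :: 'v
  assumes "metrized_graph V E" and "card V = 4" and "p \<in> V"
  shows "3 * y_inv V E p \<le> Kf V E \<and> Kf V E \<le> 4 * y_inv V E p"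
proof -
  interpret network V E
    using assms(1) by unfold_locales (auto simp: metrized_graph_def edges_in_def)
  obtain b c d where V: "V = {p, b, c, d}" and dist: "distinct [p, b, c, d]"
  proof -
    have "V \<noteq> {p}" using assms(2) by auto
    then obtain d where "d \<in> V" "p \<noteq> d" using assms(3) by blast
    then show thesis using card4_enum[OF assms(2,3)] that by metis
  qed
  have del: "has_potentials V (del_edge E i)" if "graph_connected V (del_edge E i)" for i
    using network.has_potentials_card4[OF _ assms(2)] finite_vertices edges_in_del_edge[OF edges_in] that
    by (simp add: network_def)
  have y: "y_inv V E p = 1/4 * ((\<Sum>x\<in>V. \<Sum>z\<in>V. cond E x z * (eff_res V E x z)\<^sup>2) / 2)
      + 3/4 * ((\<Sum>x\<in>V. \<Sum>z\<in>V. cond E x z * (eff_res V E p x - eff_res V E p z)\<^sup>2) / 2)"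
    by (rule y_inv_eq_sum_cond) (use assms(3) has_potentials_card4[OF assms(2)] del in auto)
  show ?thesis
    unfolding y Kf_def by (rule Kf_y_bounds_card4[OF V dist])
qed

end
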